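(* Fix a finite alphabet $\{1,\ldots,S\}$ and a probability distribution $Q=(q_1,\ldots,q_S)$. For a nonnegative vector $R=(r_1,\ldots,r_S)$ and $\hat A\subseteq\{1,\ldots,S\}$ let $\ell(\hat A;R,Q)=\frac14\sum_i|r_i-q_i|-\frac12(R(\hat A)-Q(\hat A))$. Under the Poisson model, the counts $n\hat r_i\sim\mathsf{Poi}(nr_i)$, $1\le i\le S$, are mutually independent and a decision rule $\hat A$ is a function of these counts and $Q$. Let $\mathcal{D}_0(S,\epsilon)=\{(p_1,\ldots,p_S):p_i\ge0,\ |\sum_ip_i-1|<\epsilon\}$, define the Poissonized minimax regret $R_P(S,n,Q,\epsilon)=\inf_{\hat A}\sup_{R\in\mathcal{D}_0(S,\epsilon)}\mathbb{E}_R[\ell(\hat A;R,Q)]$ and, for a prior $\mu$ on nonnegative vectors in $\mathbb{R}^S$, the Bayes regret $R_B(S,n,Q,\mu)=\inf_{\hat A}\int\mathbb{E}_R[\ell(\hat A;R,Q)]\,\mu(dR)$, both under the Poisson model. If there exists a constant $C>1$ such that $\mu\{P:\sum_{i=1}^S p_i\le C\}=1$, then $$R_P(S,n,Q,\epsilon)\ge R_B(S,n,Q,\mu)-C\,\mu\big((\mathcal{D}_0(S,\epsilon))^c\big).$$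
   Context: $\mathsf{Poi}(\lambda)$ is the Poisson distribution with mean $\lambda$; $R(\hat A)=\sum_{i\in\hat A}r_i$. *)

theory Defs
  imports "HOL-Probability.Probability"
begin

text \<open>Alphabet: a finite type 'a (so S = CARD('a)). Vectors are functions 'a \<Rightarrow> real.\<close>

definition Poi :: "real \<Rightarrow> nat pmf" where
  "Poi lam = (if 0 < lam then poisson_pmf lam else return_pmf 0)"

definition loss :: "'a::finite set \<Rightarrow> ('a \<Rightarrow> real) \<Rightarrow> ('a \<Rightarrow> real) \<Rightarrow> real" where
  "loss A R Q = (1/4) * (\<Sum>i\<in>UNIV. \<bar>R i - Q i\<bar>) - (1/2) * ((\<Sum>i\<in>A. R i) - (\<Sum>i\<in>A. Q i))"

text \<open>Poisson model: the vector of counts (n \<hat>r_i)_i, independent Poi(n r_i).\<close>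
definition counts_pmf :: "nat \<Rightarrow> ('a::finite \<Rightarrow> real) \<Rightarrow> ('a \<Rightarrow> nat) pmf" where
  "counts_pmf n R = Pi_pmf UNIV 0 (\<lambda>i. Poi (real n * R i))"

definition exp_loss ::
  "nat \<Rightarrow> ('a::finite \<Rightarrow> real) \<Rightarrow> (('a \<Rightarrow> nat) \<Rightarrow> 'a set) \<Rightarrow> ('a \<Rightarrow> real) \<Rightarrow> real" where
  "exp_loss n Q Ahat R = measure_pmf.expectation (counts_pmf n R) (\<lambda>k. loss (Ahat k) R Q)"

definition D0 :: "real \<Rightarrow> ('a::finite \<Rightarrow> real) set" where
  "D0 eps = {P. (\<forall>i. 0 \<le> P i) \<and> \<bar>(\<Sum>i\<in>UNIV. P i) - 1\<bar> < eps}"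

definition R_P :: "nat \<Rightarrow> ('a::finite \<Rightarrow> real) \<Rightarrow> real \<Rightarrow> ereal" where
  "R_P n Q eps = (INF Ahat. SUP R\<in>D0 eps. ereal (exp_loss n Q Ahat R))"

definition R_B :: "nat \<Rightarrow> ('a::finite \<Rightarrow> real) \<Rightarrow> ('a \<Rightarrow> real) measure \<Rightarrow> ereal" where
  "R_B n Q mu = (INF Ahat. ereal (\<integral>R. exp_loss n Q Ahat R \<partial>mu))"

end

theory Submission
  imports Defs
begin

text \<open>A decision rule is no better on average against the prior than its worst case over
  \<open>D\<^sub>0\<close>, except on the complement of \<open>D\<^sub>0\<close>, whose \<open>\<mu>\<close>-mass is paid for with
  a uniform bound on the expected loss. That bound is \<open>(C + 3)/4 \<le> C\<close>, because the
  \<open>\<ell>\<^sub>1\<close> distance of two vectors of total mass at most \<open>C\<close> and \<open>1\<close> is at most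
  \<open>C + 1\<close>.\<close>

lemma D0_borel: "D0 eps \<in> sets (borel :: ('a::finite \<Rightarrow> real) measure)"
proof -
  have D0_eq: "D0 eps = (\<Inter>i. {P::'a \<Rightarrow> real. 0 \<le> P i}) \<inter> {P. \<bar>(\<Sum>i\<in>UNIV. P i) - 1\<bar> < eps}"
    unfolding D0_def by auto
  have "closed {P::'a \<Rightarrow> real. 0 \<le> P i}" for i
    by (rule closed_Collect_le) (auto intro!: continuous_intros)
  moreover have "open {P::'a \<Rightarrow> real. \<bar>(\<Sum>i\<in>UNIV. P i) - 1\<bar> < eps}"
    by (rule open_Collect_less) (auto intro!: continuous_intros)
  ultimately show ?thesis
    unfolding D0_eq by (intro sets.Int borel_closed closed_INT borel_open) auto
qed

lemma loss_le:
  fixes R Q :: "'a::finite \<Rightarrow> real"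
  assumes "\<forall>i. 0 \<le> Q i" "(\<Sum>i\<in>UNIV. Q i) = 1" "\<forall>i. 0 \<le> R i" "(\<Sum>i\<in>UNIV. R i) \<le> C"
  shows "loss A R Q \<le> (C + 3) / 4"
proof -
  have "(\<Sum>i\<in>UNIV. \<bar>R i - Q i\<bar>) \<le> (\<Sum>i\<in>UNIV. R i + Q i)"
    using assms by (intro sum_mono) (auto simp: abs_le_iff)
  also have "\<dots> \<le> C + 1"
    using assms by (simp add: sum.distrib)
  finally have l1: "(\<Sum>i\<in>UNIV. \<bar>R i - Q i\<bar>) \<le> C + 1" .
  have "0 \<le> (\<Sum>i\<in>A. R i)"
    using assms by (intro sum_nonneg) auto
  moreover have "(\<Sum>i\<in>A. Q i) \<le> 1"
    using assms sum_mono2[of UNIV A Q] by auto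
  ultimately show ?thesis
    using l1 unfolding loss_def by (simp add: field_simps)
qed

lemma integrable_loss_counts:
  "integrable (measure_pmf (counts_pmf n R)) (\<lambda>k. loss (Ahat k) R Q)"
proof -
  define B where "B = Max ((\<lambda>A. \<bar>loss A R Q\<bar>) ` UNIV)"
  have "\<bar>loss A R Q\<bar> \<le> B" for A
    unfolding B_def by (intro Max_ge) auto
  then show ?thesis
    by (intro measure_pmf.integrable_const_bound[where B = B]) auto
qed

lemma exp_loss_le:
  fixes R Q :: "'a::finite \<Rightarrow> real"
  assumes "\<forall>i. 0 \<le> Q i" "(\<Sum>i\<in>UNIV. Q i) = 1" "\<forall>i. 0 \<le> R i" "(\<Sum>i\<in>UNIV. R i) \<le> C"
  shows "exp_loss n Q Ahat R \<le> (C + 3) / 4"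
proof -
  have "exp_loss n Q Ahat R \<le> measure_pmf.expectation (counts_pmf n R) (\<lambda>k. (C + 3) / 4)"
    unfolding exp_loss_def
    by (intro integral_mono integrable_loss_counts loss_le[OF assms]) auto
  then show ?thesis by simp
qed

lemma exp_loss_self: "exp_loss n Q Ahat Q = 0"
  unfolding exp_loss_def loss_def by simp

lemma (in prob_space) integral_le_SUP_plus_bound:
  assumes D: "D \<in> sets M"
    and bound: "AE x in M. x \<notin> D \<longrightarrow> f x \<le> B" and B_nonneg: "0 \<le> B"
    and SUP_nonneg: "0 \<le> (SUP x\<in>D. ereal (f x))"
  shows "ereal (\<integral>x. f x \<partial>M) \<le> (SUP x\<in>D. ereal (f x)) + ereal (B * prob (space M - D))"
proof (cases "(SUP x\<in>D. ereal (f x))")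
  case (real s)
  have s_nonneg: "0 \<le> s" using SUP_nonneg real by simp
  have f_le_s: "f x \<le> s" if "x \<in> D" for x
    using SUP_upper[OF that, of "\<lambda>x. ereal (f x)"] real by simp
  have compl: "space M - D \<in> sets M" using D by auto
  show ?thesis
  proof (cases "integrable M f")
    case True
    have "(\<integral>x. f x \<partial>M) \<le> (\<integral>x. s * indicator D x + B * indicator (space M - D) x \<partial>M)"
    proof (rule integral_mono_AE[OF True])
      show "integrable M (\<lambda>x. s * indicator D x + B * indicator (space M - D) x)"
        using D compl by (intro Bochner_Integration.integrable_add integrable_mult_right
            integrable_real_indicator) (auto simp: emeasure_finite less_top[symmetric])
      show "AE x in M. f x \<le> s * indicator D x + B * indicator (space M - D) x"
        using bound AE_space by eventually_elim (auto simp: f_le_s split: split_indicator)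
    qed
    also have "\<dots> = s * prob D + B * prob (space M - D)"
      using D compl by (subst Bochner_Integration.integral_add)
        (auto simp: emeasure_finite less_top[symmetric] intro!: integrable_real_indicator)
    also have "\<dots> \<le> s + B * prob (space M - D)"
      using s_nonneg by (simp add: mult_left_le)
    finally show ?thesis using real by simp
  next
    case False
    then show ?thesis
      using real s_nonneg B_nonneg by (simp add: not_integrable_integral_eq)
  qed
qed (use SUP_nonneg in auto)

theorem lemma9:
  fixes Q :: "'a::finite \<Rightarrow> real" and n :: nat and eps C :: real
    and mu :: "('a \<Rightarrow> real) measure"
  assumes Q_nonneg: "\<forall>i. 0 \<le> Q i" and Q_sum: "(\<Sum>i\<in>UNIV. Q i) = 1"
    and eps_pos: "0 < eps"
    and mu_prob: "prob_space mu" and mu_sets: "sets mu = sets borel"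
    and mu_nonneg: "AE R in mu. \<forall>i. 0 \<le> R i"
    and C_gt: "C > 1"
    and mu_bounded: "measure mu {P \<in> space mu. (\<Sum>i\<in>UNIV. P i) \<le> C} = 1"
  shows "R_P n Q eps \<ge> R_B n Q mu - ereal (C * measure mu (space mu - D0 eps))"
proof -
  interpret prob_space mu by (rule mu_prob)
  have D0_sets: "D0 eps \<in> sets mu" using mu_sets D0_borel by auto
  have Q_in_D0: "Q \<in> D0 eps" using Q_nonneg Q_sum eps_pos unfolding D0_def by auto
  have mass_le_C: "AE R in mu. (\<Sum>i\<in>UNIV. R i) \<le> C" using AE_prob_1[OF mu_bounded] by auto
  have "R_B n Q mu - ereal (C * prob (space mu - D0 eps))
          \<le> (SUP R\<in>D0 eps. ereal (exp_loss n Q Ahat R))" for Ahat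
  proof -
    have "AE R in mu. R \<notin> D0 eps \<longrightarrow> exp_loss n Q Ahat R \<le> C"
      using mu_nonneg mass_le_C
    proof eventually_elim
      case (elim R)
      have "exp_loss n Q Ahat R \<le> (C + 3) / 4"
        using exp_loss_le[OF Q_nonneg Q_sum] elim by blast
      then show ?case using C_gt by simp
    qed
    moreover have "0 \<le> (SUP R\<in>D0 eps. ereal (exp_loss n Q Ahat R))"
      using SUP_upper[OF Q_in_D0, of "\<lambda>R. ereal (exp_loss n Q Ahat R)"]
      by (simp add: exp_loss_self zero_ereal_def)
    ultimately have "ereal (\<integral>R. exp_loss n Q Ahat R \<partial>mu)
        \<le> (SUP R\<in>D0 eps. ereal (exp_loss n Q Ahat R)) + ereal (C * prob (space mu - D0 eps))"
      using C_gt by (intro integral_le_SUP_plus_bound D0_sets) auto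
    moreover have "R_B n Q mu \<le> ereal (\<integral>R. exp_loss n Q Ahat R \<partial>mu)"
      unfolding R_B_def by (rule INF_lower) simp
    ultimately show ?thesis by (simp add: ereal_minus_le_iff)
  qed
  then show ?thesis unfolding R_P_def by (intro INF_greatest) auto
qed

end
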